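(* In the single-item all-pay auction with budgets described in the context, let $L=\min\{B_1,B_2,v_1,v_2\}$. In a Nash equilibrium $(F_1,F_2)$, if for some $i\in\{1,2\}$ we have $\underline{x}_i<\overline{x}_i$ and $\underline{x}_{-i}=\overline{x}_{-i}$, then $Supp(F_i)=\{0,L\}$ and $F_i(0)\le 1-\frac{2L}{v_{-i}}$. Moreover, player $i$'s expected utility is $0$ and player $-i$'s expected utility is at most $v_{-i}-2L$.
   Context: Single-item all-pay auction with budgets. There are two players $i\in\{1,2\}$; $-i$ denotes the opponent of $i$. Player $i$ has budget $B_i\ge 0$ and valuation $v_i>0$ for a single item. A pure strategy of player $i$ is a bid $x_i\in[0,B_i]$; a mixed strategy is a probability distribution on $[0,B_i]$, described by its cumulative distribution function $F_i$. The player with the higher bid wins the item. Tie-breaking: if $x_1=x_2=\min\{B_1,B_2,v_1,v_2\}$ and $\min\{B_i,v_i\}>\min\{B_{-i},v_{-i}\}$ for some $i$, then player $i$ wins; in all other ties each player wins with probability $\frac12$. Player $i$'s utility is $v_i-x_i$ if he wins and $-x_i$ if he loses. A Nash equilibrium is a pair $(F_1,F_2)$ such that each $F_i$ maximizes player $i$'s expected utility against $F_{-i}$ over all mixed strategies on $[0,B_i]$. $Supp(F_i)$ is the support of $F_i$, $\overline{x}_i=\sup Supp(F_i)$ and $\underline{x}_i=\inf Supp(F_i)$. *)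

theory Defs
  imports "HOL-Probability.Probability"
begin

text \<open>Two players indexed by 1 and 2; the opponent of i is 3 - i.
  B and v give budgets and valuations of the players.\<close>

definition opp :: "nat \<Rightarrow> nat" where
  "opp i = 3 - i"

definition Lval :: "(nat \<Rightarrow> real) \<Rightarrow> (nat \<Rightarrow> real) \<Rightarrow> real" where
  "Lval B v = min (min (B 1) (B 2)) (min (v 1) (v 2))"

definition win :: "(nat \<Rightarrow> real) \<Rightarrow> (nat \<Rightarrow> real) \<Rightarrow> nat \<Rightarrow> real \<Rightarrow> real \<Rightarrow> real" where
  "win B v i x y =
     (if y < x then 1
      else if x < y then 0
      else if x = Lval B v \<and> min (B i) (v i) > min (B (opp i)) (v (opp i)) then 1
      else if x = Lval B v \<and> min (B (opp i)) (v (opp i)) > min (B i) (v i) then 0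
      else 1/2)"

definition util :: "(nat \<Rightarrow> real) \<Rightarrow> (nat \<Rightarrow> real) \<Rightarrow> nat \<Rightarrow> real \<Rightarrow> real \<Rightarrow> real" where
  "util B v i x y = v i * win B v i x y - x"

definition mixed_strategy :: "(nat \<Rightarrow> real) \<Rightarrow> nat \<Rightarrow> real measure \<Rightarrow> bool" where
  "mixed_strategy B i G \<longleftrightarrow>
     prob_space G \<and> sets G = sets borel \<and> measure G {0..B i} = 1"

definition exp_util :: "(nat \<Rightarrow> real) \<Rightarrow> (nat \<Rightarrow> real) \<Rightarrow> nat \<Rightarrow> real measure \<Rightarrow> real measure \<Rightarrow> real" where
  "exp_util B v i G H = (\<integral>z. util B v i (fst z) (snd z) \<partial>(pair_measure G H))"

definition nash_eq :: "(nat \<Rightarrow> real) \<Rightarrow> (nat \<Rightarrow> real) \<Rightarrow> (nat \<Rightarrow> real measure) \<Rightarrow> bool" where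
  "nash_eq B v F \<longleftrightarrow>
     (\<forall>i\<in>{1,2}. mixed_strategy B i (F i) \<and>
        (\<forall>G. mixed_strategy B i G \<longrightarrow>
              exp_util B v i G (F (opp i)) \<le> exp_util B v i (F i) (F (opp i))))"

definition supp :: "real measure \<Rightarrow> real set" where
  "supp G = {x. \<forall>e>0. measure G {x - e<..<x + e} > 0}"

definition cdf_of :: "real measure \<Rightarrow> real \<Rightarrow> real" where
  "cdf_of G t = measure G {..t}"

end

theory Submission
  imports Defs
begin

text \<open>Against a pure bid c of the opponent -i, a bid x earns -x below c and v(i) - x above
  it, so the only possible best responses of player i are 0 and c. A best response with two
  support points thus puts masses p, q > 0 on 0 and c and earns what the bid 0 earns, namely 0.
  Indifference at c forces the tie at c to be split, so v(i) = 2c, and c = B(i), since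
  otherwise overbidding c would be profitable. The opponent earns v(-i) - c - q v(-i)/2 at c;
  undercutting c slightly earns almost p v(-i), whence q v(-i) \<ge> 2c, and overbidding c
  slightly wins outright, whence c = B(-i). Hence c = B(1) = B(2) = L.\<close>

text \<open>By Lindelof, the complement of the support is covered by countably many null
  open intervals.\<close>

lemma AE_in_supp:
  assumes "finite_measure M" "sets M = sets borel"
  shows "AE x in M. x \<in> supp M"
proof -
  define \<F> where "\<F> = {{a<..<b} | a b :: real. measure M {a<..<b} = 0}"
  have "\<And>S. S \<in> \<F> \<Longrightarrow> open S"
    unfolding \<F>_def by auto
  then obtain \<F>' where \<F>': "\<F>' \<subseteq> \<F>" "countable \<F>'" "\<Union>\<F>' = \<Union>\<F>"
    by (rule Lindelof)
  have "(\<Union>S\<in>\<F>'. S) \<in> null_sets M"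
    using \<F>' assms unfolding \<F>_def
    by (intro null_sets_UN') (auto simp: null_sets_def finite_measure.emeasure_eq_measure)
  moreover have "- supp M \<subseteq> \<Union>\<F>"
  proof
    fix x assume "x \<in> - supp M"
    then obtain e where "e > 0" "\<not> measure M {x - e<..<x + e} > 0"
      unfolding supp_def by auto
    then show "x \<in> \<Union>\<F>"
      unfolding \<F>_def using measure_nonneg[of M "{x - e<..<x + e}"] by force
  qed
  ultimately show ?thesis
    using \<F>'(3) by (intro AE_I'[of "\<Union>\<F>'"]) auto
qed

lemma supp_subset_closed:
  assumes "sets M = sets borel" "AE x in M. x \<in> S" "closed S"
  shows "supp M \<subseteq> S"
proof
  fix x assume x: "x \<in> supp M"
  show "x \<in> S"
  proof (rule ccontr)
    assume "x \<notin> S"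
    then obtain e where e: "e > 0" "ball x e \<subseteq> - S"
      using assms(3) open_contains_ball[of "- S"] by auto
    then have disjoint: "{x - e<..<x + e} \<subseteq> - S"
      by (simp add: ball_eq_greaterThanLessThan)
    have "AE y in M. y \<notin> {x - e<..<x + e}"
      using assms(2) by eventually_elim (use disjoint in blast)
    then have "{x - e<..<x + e} \<in> null_sets M"
      using assms(1) by (subst AE_iff_null_sets) auto
    then have "measure M {x - e<..<x + e} = 0"
      by (simp add: measure_def null_setsD1)
    then show False
      using x e(1) unfolding supp_def by auto
  qed
qed

lemma supp_nonempty:
  assumes "prob_space M" "sets M = sets borel"
  shows "supp M \<noteq> {}"
  using AE_in_supp[OF prob_space.finite_measure[OF assms(1)] assms(2)]
    prob_space.AE_False[OF assms(1)] by auto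

lemma measure_singleton_pos_of_supp:
  assumes "sets M = sets borel" "finite S" "AE x in M. x \<in> S" "x \<in> supp M"
  shows "measure M {x} > 0"
proof -
  obtain d where d: "d > 0" "\<And>y. y \<in> S \<Longrightarrow> y \<noteq> x \<Longrightarrow> d \<le> dist x y"
    using finite_set_avoid[OF assms(2), of x] by auto
  have "AE y in M. y \<in> {x - d<..<x + d} \<longleftrightarrow> y \<in> {x}"
    using assms(3) by eventually_elim (use d in \<open>force simp: dist_real_def\<close>)
  then have "measure M {x - d<..<x + d} = measure M {x}"
    using assms(1) by (intro measure_eq_AE) auto
  then show ?thesis
    using assms(4) d(1) unfolding supp_def by auto
qed

lemma AE_atom:
  assumes "AE x in M. P x" "measure M {a} \<noteq> 0" "{a} \<in> sets M"
  shows "P a"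
proof (rule ccontr)
  assume "\<not> P a"
  with assms(1) have "AE x in M. x \<notin> {a}"
    by (auto elim: eventually_mono)
  then have "{a} \<in> null_sets M"
    using assms(3) by (subst AE_iff_null_sets)
  then show False
    using assms(2) by (simp add: measure_def null_setsD1)
qed

lemma Inf_eq_Sup_imp_singleton:
  fixes S :: "real set"
  assumes "S \<noteq> {}" "bdd_below S" "bdd_above S" "Inf S = Sup S"
  shows "S = {Inf S}"
proof -
  have "x = Inf S" if "x \<in> S" for x
    using cInf_lower[OF that assms(2)] cSup_upper[OF that assms(3)] assms(4) by linarith
  then show ?thesis
    using assms(1) by blast
qed

lemma integral_finite_support:
  fixes g :: "real \<Rightarrow> real"
  assumes M: "finite_measure M" "sets M = sets borel" and S: "finite S" "AE x in M. x \<in> S"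
    and g: "g \<in> borel_measurable borel"
  shows "(\<integral>x. g x \<partial>M) = (\<Sum>s\<in>S. measure M {s} * g s)"
proof -
  have space: "space M = UNIV"
    using M(2) sets_eq_imp_space_eq by fastforce
  have "AE x in M. g x = (\<Sum>s\<in>S. indicator {s} x * g s)"
    using S(2) by eventually_elim (use S(1) in \<open>simp add: indicator_def sum.delta\<close>)
  moreover have "(\<lambda>x. \<Sum>s\<in>S. indicator {s} x * g s :: real) \<in> borel_measurable borel"
    by measurable
  ultimately have "(\<integral>x. g x \<partial>M) = (\<integral>x. (\<Sum>s\<in>S. indicator {s} x * g s) \<partial>M)"
    using g measurable_cong_sets[OF M(2) refl] by (intro integral_cong_AE) auto
  also have "\<dots> = (\<Sum>s\<in>S. (\<integral>x. indicator {s} x * g s \<partial>M))"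
  proof -
    have "integrable M (\<lambda>x. indicator {s} x * g s :: real)" for s
    proof -
      have "emeasure M {s} < \<infinity>"
        using finite_measure.emeasure_finite[OF M(1), of "{s}"] by (simp add: less_top)
      then show ?thesis
        using M(2) by (intro integrable_mult_left integrable_real_indicator) auto
    qed
    then show ?thesis
      by simp
  qed
  also have "\<dots> = (\<Sum>s\<in>S. measure M {s} * g s)"
    by (simp add: space)
  finally show ?thesis .
qed

lemma AE_eq_integral_if_AE_le_integral:
  fixes f :: "'a \<Rightarrow> real"
  assumes "prob_space M" "integrable M f" "AE x in M. f x \<le> (\<integral>x. f x \<partial>M)"
  shows "AE x in M. f x = (\<integral>x. f x \<partial>M)"
proof -
  interpret prob_space M by fact
  have "(\<integral>x. (\<integral>x. f x \<partial>M) - f x \<partial>M) = 0"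
    using assms(2) by (simp add: Bochner_Integration.integral_diff prob_space)
  then have "AE x in M. (\<integral>x. f x \<partial>M) - f x = 0"
    using assms(2,3) by (subst integral_nonneg_eq_0_iff_AE[symmetric]) auto
  then show ?thesis
    by eventually_elim simp
qed

lemma integral_AE_eq_const:
  fixes g :: "'a \<Rightarrow> real"
  assumes "prob_space M" "AE x in M. x = c" "g \<in> borel_measurable M"
  shows "(\<integral>x. g x \<partial>M) = g c"
proof -
  interpret prob_space M by fact
  have "(\<integral>x. g x \<partial>M) = (\<integral>x. g c \<partial>M)"
    using assms(2,3) by (intro integral_cong_AE) (auto elim: eventually_mono)
  also have "\<dots> = g c"
    using lebesgue_integral_const[of M "g c"] prob_space by simp
  finally show ?thesis .
qed

lemma win_gt: "y < x \<Longrightarrow> win B v i x y = 1"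
  unfolding win_def by auto

lemma win_lt: "x < y \<Longrightarrow> win B v i x y = 0"
  unfolding win_def by auto

lemma win_bounds: "0 \<le> win B v i x y" "win B v i x y \<le> 1"
  unfolding win_def by auto

lemma opp_opp: "i \<in> {1, 2} \<Longrightarrow> opp (opp i) = i"
  unfolding opp_def by auto

lemma opp_in_players: "i \<in> {1, 2} \<Longrightarrow> opp i \<in> {1, 2}"
  unfolding opp_def by auto

lemma win_opp_tie: "i \<in> {1, 2} \<Longrightarrow> win B v i x x = 1/2 \<Longrightarrow> win B v (opp i) x x = 1/2"
  unfolding win_def by (auto simp: opp_opp split: if_splits)

lemma Lval_le: "i \<in> {1, 2} \<Longrightarrow> Lval B v \<le> min (B i) (v i)"
  unfolding Lval_def by auto

lemma borel_measurable_util: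
  "(\<lambda>z. util B v i (fst z) (snd z)) \<in> borel_measurable (borel \<Otimes>\<^sub>M borel)"
  "(\<lambda>x. util B v i x y) \<in> borel_measurable borel"
  "(\<lambda>y. util B v i x y) \<in> borel_measurable borel"
  unfolding util_def win_def by (measurable, measurable, measurable)

lemma abs_util_le:
  assumes "x \<in> {0..b}"
  shows "\<bar>util B v i x y\<bar> \<le> \<bar>v i\<bar> + b"
proof -
  have "\<bar>v i * win B v i x y\<bar> \<le> \<bar>v i\<bar>"
    using win_bounds[of B v i x y] by (simp add: abs_mult mult_left_le)
  then show ?thesis
    using assms unfolding util_def by auto
qed

lemma mixed_strategyD:
  assumes "mixed_strategy B i G"
  shows "prob_space G" "sets G = sets borel" "AE x in G. x \<in> {0..B i}"
  using assms prob_space.AE_prob_1[of G "{0..B i}"] unfolding mixed_strategy_def by simp_all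

lemma mixed_strategy_return: "x \<in> {0..B i} \<Longrightarrow> mixed_strategy B i (return borel x)"
  unfolding mixed_strategy_def by (simp add: prob_space_return measure_return)

lemma supp_mixed_strategy: "mixed_strategy B i G \<Longrightarrow> supp G \<subseteq> {0..B i}"
  using supp_subset_closed[OF mixed_strategyD(2,3)] by simp

lemma mixed_strategy_AE_supp: "mixed_strategy B i G \<Longrightarrow> AE x in G. x \<in> supp G"
  using AE_in_supp prob_space.finite_measure mixed_strategyD(1,2) by metis

lemma mixed_strategy_supp_singleton:
  assumes "mixed_strategy B i G" "Inf (supp G) = Sup (supp G)"
  shows "supp G = {Inf (supp G)}"
proof (rule Inf_eq_Sup_imp_singleton)
  show "supp G \<noteq> {}"
    using mixed_strategyD(1,2)[OF assms(1)] by (rule supp_nonempty)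
  show "bdd_below (supp G)"
    using supp_mixed_strategy[OF assms(1)] by (meson bdd_below_Icc bdd_below_mono)
  show "bdd_above (supp G)"
    using supp_mixed_strategy[OF assms(1)] by (meson bdd_above_Icc bdd_above_mono)
qed (fact assms(2))

lemma integrable_util_left:
  assumes "mixed_strategy B i G"
  shows "integrable G (\<lambda>x. util B v k x y)"
proof -
  interpret prob_space G
    using mixed_strategyD(1)[OF assms] .
  have "AE x in G. norm (util B v k x y) \<le> \<bar>v k\<bar> + B i"
    using mixed_strategyD(3)[OF assms] by eventually_elim (simp add: abs_util_le)
  moreover have "(\<lambda>x. util B v k x y) \<in> borel_measurable G"
    using measurable_cong_sets[OF mixed_strategyD(2)[OF assms] refl] borel_measurable_util(2)
    by blast
  ultimately show ?thesis
    by (rule integrable_const_bound)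
qed

lemma exp_util_iterated:
  assumes G: "mixed_strategy B j G" and H: "prob_space H" "sets H = sets borel"
  shows "exp_util B v i G H = (\<integral>x. (\<integral>y. util B v i x y \<partial>H) \<partial>G)"
proof -
  interpret GH: pair_prob_space G H
    using mixed_strategyD(1)[OF G] H(1)
    by (simp add: pair_prob_space_def pair_sigma_finite_def prob_space_imp_sigma_finite)
  have "sets (G \<Otimes>\<^sub>M H) = sets (borel \<Otimes>\<^sub>M borel)"
    using mixed_strategyD(2)[OF G] H(2) by (intro sets_pair_measure_cong)
  then have meas: "(\<lambda>z. util B v i (fst z) (snd z)) \<in> borel_measurable (G \<Otimes>\<^sub>M H)"
    using borel_measurable_util(1) measurable_cong_sets[OF _ refl] by blast
  have "AE z in G \<Otimes>\<^sub>M H. norm (util B v i (fst z) (snd z)) \<le> \<bar>v i\<bar> + B j"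
  proof (rule GH.AE_pair_measure)
    show "{z \<in> space (G \<Otimes>\<^sub>M H). norm (util B v i (fst z) (snd z)) \<le> \<bar>v i\<bar> + B j}
        \<in> sets (G \<Otimes>\<^sub>M H)"
      using meas by measurable
    show "AE x in G. AE y in H. norm (util B v i (fst (x, y)) (snd (x, y))) \<le> \<bar>v i\<bar> + B j"
      using mixed_strategyD(3)[OF G] by eventually_elim (simp add: abs_util_le)
  qed
  then have "integrable (G \<Otimes>\<^sub>M H) (\<lambda>z. util B v i (fst z) (snd z))"
    using meas by (intro GH.P.integrable_const_bound)
  from GH.integral_fst'[OF this] show ?thesis
    unfolding exp_util_def by simp
qed

lemma exp_util_pure_right:
  assumes G: "mixed_strategy B j G" and H: "prob_space H" "sets H = sets borel" "AE y in H. y = c"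
  shows "exp_util B v i G H = (\<integral>x. util B v i x c \<partial>G)"
proof -
  have "(\<lambda>y. util B v i x y) \<in> borel_measurable H" for x
    using borel_measurable_util(3) measurable_cong_sets[OF H(2) refl] by blast
  then show ?thesis
    unfolding exp_util_iterated[OF G H(1,2)] using integral_AE_eq_const[OF H(1,3)]
    by (intro Bochner_Integration.integral_cong) auto
qed

lemma exp_util_pure_left:
  assumes G: "mixed_strategy B j G" "AE x in G. x = c" and H: "prob_space H" "sets H = sets borel"
  shows "exp_util B v i G H = (\<integral>y. util B v i c y \<partial>H)"
proof -
  interpret H: prob_space H by fact
  have "sets (borel \<Otimes>\<^sub>M H) = sets (borel \<Otimes>\<^sub>M borel)"
    using H(2) by (intro sets_pair_measure_cong) auto
  then have "(\<lambda>z. util B v i (fst z) (snd z)) \<in> borel_measurable (borel \<Otimes>\<^sub>M H)"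
    using borel_measurable_util(1) measurable_cong_sets[OF _ refl] by blast
  then have "(\<lambda>x. \<integral>y. util B v i x y \<partial>H) \<in> borel_measurable borel"
    by (intro H.borel_measurable_lebesgue_integral) (simp add: case_prod_beta')
  then show ?thesis
    unfolding exp_util_iterated[OF G(1) H]
    using integral_AE_eq_const[OF mixed_strategyD(1)[OF G(1)] G(2)]
      measurable_cong_sets[OF mixed_strategyD(2)[OF G(1)] refl] by blast
qed

lemma nash_eq_mixed_strategy: "nash_eq B v F \<Longrightarrow> i \<in> {1, 2} \<Longrightarrow> mixed_strategy B i (F i)"
  unfolding nash_eq_def by blast

lemma nash_eq_pure_deviation:
  assumes "nash_eq B v F" "i \<in> {1, 2}" "x \<in> {0..B i}"
  shows "(\<integral>y. util B v i x y \<partial>F (opp i)) \<le> exp_util B v i (F i) (F (opp i))"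
proof -
  have H: "mixed_strategy B (opp i) (F (opp i))"
    using nash_eq_mixed_strategy[OF assms(1) opp_in_players[OF assms(2)]] .
  have G: "mixed_strategy B i (return borel x)"
    using assms(3) by (rule mixed_strategy_return)
  have "exp_util B v i (return borel x) (F (opp i)) = (\<integral>y. util B v i x y \<partial>F (opp i))"
    using G mixed_strategyD(1,2)[OF H] by (intro exp_util_pure_left) (auto simp: AE_return)
  moreover have "exp_util B v i (return borel x) (F (opp i)) \<le> exp_util B v i (F i) (F (opp i))"
    using assms(1,2) G unfolding nash_eq_def by blast
  ultimately show ?thesis
    by simp
qed

lemma util_argmax_against_pure_bid:
  assumes "0 \<le> c" "0 \<le> v i" "x \<in> {0..b}" "\<forall>y\<in>{0..b}. util B v i y c \<le> util B v i x c"
  shows "x = 0 \<or> x = c"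
proof (rule ccontr)
  assume "\<not> (x = 0 \<or> x = c)"
  then consider "0 < x" "x < c" | "c < x"
    using assms(3) by force
  then show False
  proof cases
    case 1
    have "0 \<le> util B v i 0 c"
      using win_bounds(1)[of B v i 0 c] assms(2) unfolding util_def by simp
    moreover have "util B v i x c = - x"
      using 1 by (simp add: util_def win_lt)
    ultimately show False
      using assms(3,4) 1 by force
  next
    case 2
    define y where "y = (x + c) / 2"
    have y: "y \<in> {0..b}" "c < y" "y < x"
      using 2 assms(1,3) unfolding y_def by auto
    then have "util B v i x c < util B v i y c"
      using 2 by (simp add: util_def win_gt)
    then show False
      using assms(4) y(1) by force
  qed
qed

lemma best_response_to_pure_bid:
  assumes "nash_eq B v F" "i \<in> {1, 2}" "0 \<le> v i" "0 \<le> c" "AE y in F (opp i). y = c"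
  shows "\<forall>x\<in>{0..B i}. util B v i x c \<le> exp_util B v i (F i) (F (opp i))"
    and "AE x in F i. x \<in> {0, c} \<and> util B v i x c = exp_util B v i (F i) (F (opp i))"
proof -
  let ?U = "exp_util B v i (F i) (F (opp i))"
  have G: "mixed_strategy B i (F i)"
    using assms(1,2) by (rule nash_eq_mixed_strategy)
  have H: "mixed_strategy B (opp i) (F (opp i))"
    using nash_eq_mixed_strategy[OF assms(1) opp_in_players[OF assms(2)]] .
  have "(\<integral>y. util B v i x y \<partial>F (opp i)) = util B v i x c" for x
    using borel_measurable_util(3) measurable_cong_sets[OF mixed_strategyD(2)[OF H] refl]
    by (intro integral_AE_eq_const[OF mixed_strategyD(1)[OF H] assms(5)]) blast
  then show le: "\<forall>x\<in>{0..B i}. util B v i x c \<le> ?U"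
    using nash_eq_pure_deviation[OF assms(1,2)] by metis
  have U: "?U = (\<integral>x. util B v i x c \<partial>F i)"
    using G mixed_strategyD(1,2)[OF H] assms(5) by (rule exp_util_pure_right)
  have "AE x in F i. util B v i x c \<le> ?U"
    using mixed_strategyD(3)[OF G] by eventually_elim (use le in blast)
  then have "AE x in F i. util B v i x c = ?U"
    unfolding U using mixed_strategyD(1)[OF G] integrable_util_left[OF G]
    by (rule AE_eq_integral_if_AE_le_integral[rotated 2])
  with mixed_strategyD(3)[OF G] show "AE x in F i. x \<in> {0, c} \<and> util B v i x c = ?U"
  proof eventually_elim
    case (elim x)
    then have "x = 0 \<or> x = c"
      using le assms(3,4)
      by (intro util_argmax_against_pure_bid[where B = B and v = v and i = i and b = "B i"]) auto
    then show ?case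
      using elim(2) by simp
  qed
qed

lemma tie_of_zero_payoff_at_pure_bid:
  assumes "i \<in> {1, 2}" "0 < c" "c \<le> B i" "util B v i c c = 0"
    and "\<forall>x\<in>{0..B i}. util B v i x c \<le> 0"
  shows "win B v i c c = 1/2" "v i = 2 * c" "c = B i"
proof -
  have vw: "v i * win B v i c c = c"
    using assms(4) unfolding util_def by simp
  \<comment> \<open>winning the tie outright would give \<open>c = v i \<ge> min (B i) (v i)\<close>, which cannot
    exceed the opponent's \<open>min (B (opp i)) (v (opp i)) \<ge> Lval B v = c\<close>\<close>
  have "\<not> (c = Lval B v \<and> min (B (opp i)) (v (opp i)) < min (B i) (v i))"
  proof
    assume "c = Lval B v \<and> min (B (opp i)) (v (opp i)) < min (B i) (v i)"
    moreover then have "c = v i"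
      using vw unfolding win_def by simp
    ultimately show False
      using Lval_le[OF opp_in_players[OF assms(1)], of B v] by linarith
  qed
  moreover have "win B v i c c \<noteq> 0"
    using vw assms(2) by auto
  ultimately show half: "win B v i c c = 1/2"
    unfolding win_def by (auto split: if_splits)
  with vw show v: "v i = 2 * c"
    by simp
  show "c = B i"
  proof (rule ccontr)
    assume "c \<noteq> B i"
    define x where "x = min (B i) (3 / 2 * c)"
    have x: "x \<in> {0..B i}" "c < x" "x < v i"
      using assms(2,3) \<open>c \<noteq> B i\<close> v unfolding x_def by auto
    then have "0 < util B v i x c"
      by (simp add: util_def win_gt)
    then show False
      using assms(5) x(1) by force
  qed
qed

lemma two_point_payoff_at_tie:
  assumes "p + q = 1" "0 < c" "win B v j c c = 1/2"
  shows "p * util B v j c 0 + q * util B v j c c = v j - c - q * v j / 2"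
proof -
  have "p = 1 - q"
    using assms(1) by simp
  show ?thesis
    unfolding util_def \<open>p = 1 - q\<close> using assms(2) by (simp add: win_gt assms(3) algebra_simps)
qed

lemma best_pure_bid_against_two_point:
  assumes "\<forall>y\<in>{0..B j}.
      p * util B v j y 0 + q * util B v j y c \<le> p * util B v j c 0 + q * util B v j c c"
    and "p + q = 1" "0 < c" "c \<le> B j" "win B v j c c = 1/2"
  shows "2 * c \<le> q * v j" "c = B j"
proof -
  have p: "p = 1 - q"
    using assms(2) by simp
  have payoff_c: "p * util B v j c 0 + q * util B v j c c = v j - c - q * v j / 2"
    using assms(2,3,5) by (rule two_point_payoff_at_tie)
  show bound: "2 * c \<le> q * v j"
  proof (rule ccontr)
    assume "\<not> 2 * c \<le> q * v j"
    define y where "y = min (c / 2) ((c - q * v j / 2) / 2)"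
    have y: "0 < y" "y < c" "y < c - q * v j / 2"
      using \<open>\<not> 2 * c \<le> q * v j\<close> assms(3) unfolding y_def by (auto simp: min_def)
    have "p * util B v j y 0 + q * util B v j y c = p * v j - y"
      unfolding p util_def using y(1,2) by (simp add: win_gt win_lt algebra_simps)
    moreover have "y \<in> {0..B j}"
      using y(1,2) assms(4) by simp
    ultimately have "(1 - q) * v j - y \<le> v j - c - q * v j / 2"
      using assms(1) payoff_c unfolding p by metis
    then show False
      using y(3) by (simp add: algebra_simps)
  qed
  show "c = B j"
  proof (rule ccontr)
    assume "c \<noteq> B j"
    define y where "y = min (B j) (c + q * v j / 4)"
    have y: "y \<in> {0..B j}" "c < y" "y < c + q * v j / 2"
      using \<open>c \<noteq> B j\<close> assms(3,4) bound unfolding y_def by auto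
    then have "p * util B v j y 0 + q * util B v j y c = v j - y"
      unfolding p util_def using y(2) assms(3) by (simp add: win_gt algebra_simps)
    then show False
      using assms(1) payoff_c y by force
  qed
qed

lemma nash_mixed_response_to_pure_bid:
  assumes "nash_eq B v F" "i \<in> {1, 2}" "0 \<le> v i" "supp (F (opp i)) = {c}"
    and "Inf (supp (F i)) < Sup (supp (F i))"
  shows "supp (F i) = {0, c}" "0 < c" "c = B i" "v i = 2 * c" "win B v i c c = 1/2"
    and "exp_util B v i (F i) (F (opp i)) = 0"
proof -
  let ?U = "exp_util B v i (F i) (F (opp i))"
  have G: "mixed_strategy B i (F i)"
    using assms(1,2) by (rule nash_eq_mixed_strategy)
  have H: "mixed_strategy B (opp i) (F (opp i))"
    using nash_eq_mixed_strategy[OF assms(1) opp_in_players[OF assms(2)]] .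
  have c: "0 \<le> c"
    using supp_mixed_strategy[OF H] assms(4) by simp
  have "AE y in F (opp i). y = c"
    using mixed_strategy_AE_supp[OF H] assms(4) by simp
  note br = best_response_to_pure_bid[OF assms(1-3) c this]
  have AE_two_point: "AE x in F i. x \<in> {0, c}"
    using br(2) by (auto elim: eventually_mono)
  then have "supp (F i) \<subseteq> {0, c}"
    using mixed_strategyD(2)[OF G] by (intro supp_subset_closed) auto
  then have "supp (F i) = {} \<or> supp (F i) = {0} \<or> supp (F i) = {c} \<or> supp (F i) = {0, c}"
    by blast
  then show supp: "supp (F i) = {0, c}"
    using supp_nonempty[OF mixed_strategyD(1,2)[OF G]] assms(5) by (elim disjE) simp_all
  with assms(5) c show c_pos: "0 < c"
    by (cases "c = 0") simp_all
  have "0 < measure (F i) {x}" if "x \<in> {0, c}" for x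
    using measure_singleton_pos_of_supp[OF mixed_strategyD(2)[OF G] _ AE_two_point] that supp by simp
  then have "util B v i x c = ?U" if "x \<in> {0, c}" for x
    using AE_atom[OF br(2), of x] that mixed_strategyD(2)[OF G] by force
  moreover have "util B v i 0 c = 0"
    using c_pos by (simp add: util_def win_lt)
  ultimately have "?U = 0" and "util B v i c c = 0"
    by auto
  then show "?U = 0"
    by simp
  moreover have "c \<le> B i"
    using supp_mixed_strategy[OF G] supp by auto
  ultimately show "win B v i c c = 1/2" "v i = 2 * c" "c = B i"
    using tie_of_zero_payoff_at_pure_bid[OF assms(2) c_pos] br(1) \<open>util B v i c c = 0\<close> by auto
qed

lemma nash_pure_bid_against_two_point:
  assumes "nash_eq B v F" "i \<in> {1, 2}" "supp (F (opp i)) = {c}" "supp (F i) = {0, c}"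
    and "0 < c" "win B v (opp i) c c = 1/2"
  defines "q \<equiv> measure (F i) {c}"
  shows "2 * c \<le> q * v (opp i)" "2 * c \<le> v (opp i)" "c = B (opp i)"
    and "exp_util B v (opp i) (F (opp i)) (F i) = v (opp i) - c - q * v (opp i) / 2"
    and "measure (F i) {0} = 1 - q"
proof -
  define j where "j = opp i"
  define p where "p = measure (F i) {0}"
  have j: "j \<in> {1, 2}" "opp j = i"
    unfolding j_def using opp_in_players[OF assms(2)] opp_opp[OF assms(2)] by auto
  have G: "mixed_strategy B i (F i)"
    using assms(1,2) by (rule nash_eq_mixed_strategy)
  have H: "mixed_strategy B j (F j)"
    using assms(1) j(1) by (rule nash_eq_mixed_strategy)
  note G' = prob_space.finite_measure[OF mixed_strategyD(1)[OF G]] mixed_strategyD(2)[OF G]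
  have AE_two_point: "AE x in F i. x \<in> {0, c}"
    using mixed_strategy_AE_supp[OF G] assms(4) by simp
  have payoff: "(\<integral>x. util B v j y x \<partial>F i) = p * util B v j y 0 + q * util B v j y c" for y
    using integral_finite_support[OF G' _ AE_two_point borel_measurable_util(3)] assms(5)
    unfolding p_def q_def by simp
  have "(\<integral>x. 1 \<partial>F i) = (1 :: real)"
    using prob_space.prob_space[OF mixed_strategyD(1)[OF G]] by simp
  then have pq: "p + q = 1"
    using integral_finite_support[OF G' _ AE_two_point, of "\<lambda>_. 1"] assms(5)
    unfolding p_def q_def by simp
  have V: "exp_util B v j (F j) (F i) = p * util B v j c 0 + q * util B v j c c"
    using mixed_strategy_AE_supp[OF H] assms(3) mixed_strategyD(1,2)[OF G] payoff
    unfolding j_def by (subst exp_util_pure_left[OF H[unfolded j_def]]) auto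
  have "c \<le> B j"
    using supp_mixed_strategy[OF H] assms(3) unfolding j_def by simp
  moreover have "\<forall>y\<in>{0..B j}.
      p * util B v j y 0 + q * util B v j y c \<le> p * util B v j c 0 + q * util B v j c c"
    using nash_eq_pure_deviation[OF assms(1) j(1)] payoff V unfolding j(2) by metis
  ultimately have bound: "2 * c \<le> q * v j" and "c = B j"
    using best_pure_bid_against_two_point[OF _ pq assms(5) _ assms(6)[folded j_def]] by auto
  then show "2 * c \<le> q * v (opp i)" "c = B (opp i)"
    unfolding j_def by simp_all
  have "0 \<le> p" "0 \<le> q"
    unfolding p_def q_def by simp_all
  moreover have "0 < q * v j"
    using bound assms(5) by linarith
  ultimately have "q * v j \<le> v j"
    using pq by (simp add: zero_less_mult_iff mult_left_le_one_le)
  with bound show "2 * c \<le> v (opp i)"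
    unfolding j_def by linarith
  show "exp_util B v (opp i) (F (opp i)) (F i) = v (opp i) - c - q * v (opp i) / 2"
    using V two_point_payoff_at_tie[OF pq assms(5,6)[folded j_def]] unfolding j_def by simp
  show "measure (F i) {0} = 1 - q"
    using pq unfolding p_def by simp
qed

lemma Lval_eq_common_budget:
  assumes "i \<in> {1, 2}" "0 < c" "c = B i" "c = B (opp i)" "v i = 2 * c" "2 * c \<le> v (opp i)"
  shows "Lval B v = c"
  using assms unfolding Lval_def opp_def by auto

lemma cdf_of_zero_two_point:
  assumes "sets M = sets borel" "AE x in M. x \<in> {0, c}" "0 < c"
  shows "cdf_of M 0 = measure M {0}"
  unfolding cdf_of_def using assms by (intro measure_eq_AE) (auto elim: eventually_mono)

theorem lemma3:
  fixes B v :: "nat \<Rightarrow> real" and F :: "nat \<Rightarrow> real measure" and i :: nat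
  assumes "B 1 \<ge> 0" and "B 2 \<ge> 0" and "v 1 > 0" and "v 2 > 0"
    and "nash_eq B v F"
    and "i \<in> {1, 2}"
    and "Inf (supp (F i)) < Sup (supp (F i))"
    and "Inf (supp (F (opp i))) = Sup (supp (F (opp i)))"
  shows "supp (F i) = {0, Lval B v}
    \<and> cdf_of (F i) 0 \<le> 1 - 2 * Lval B v / v (opp i)
    \<and> exp_util B v i (F i) (F (opp i)) = 0
    \<and> exp_util B v (opp i) (F (opp i)) (F i) \<le> v (opp i) - 2 * Lval B v"
proof -
  have G: "mixed_strategy B i (F i)" and H: "mixed_strategy B (opp i) (F (opp i))"
    using nash_eq_mixed_strategy assms(5,6) opp_in_players by blast+
  have v_pos: "0 < v i" "0 < v (opp i)"
    using assms(3,4,6) opp_in_players[OF assms(6)] by auto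
  define c where "c = Inf (supp (F (opp i)))"
  have "supp (F (opp i)) = {c}"
    using mixed_strategy_supp_singleton[OF H assms(8)] unfolding c_def .
  note mixed = nash_mixed_response_to_pure_bid[OF assms(5,6) less_imp_le[OF v_pos(1)] this assms(7)]
  note pure = nash_pure_bid_against_two_point[OF assms(5,6) \<open>supp (F (opp i)) = {c}\<close> mixed(1,2)
      win_opp_tie[OF assms(6) mixed(5)]]
  have L: "Lval B v = c"
    using Lval_eq_common_budget[OF assms(6) mixed(2,3) pure(3) mixed(4) pure(2)] .
  have "cdf_of (F i) 0 = 1 - measure (F i) {c}"
    using cdf_of_zero_two_point[OF mixed_strategyD(2)[OF G] _ mixed(2)] mixed_strategy_AE_supp[OF G]
      mixed(1) pure(5) by simp
  moreover have "2 * c / v (opp i) \<le> measure (F i) {c}"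
    using pure(1) v_pos(2) by (simp add: divide_le_eq mult.commute)
  moreover have "exp_util B v (opp i) (F (opp i)) (F i) \<le> v (opp i) - 2 * c"
    using pure(1,4) by linarith
  ultimately show ?thesis
    using mixed(1,6) L by simp
qed

end
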